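(* For the opinion--action model described in the context with $\phi\in(0,1)$ and any initial values, there exists a constant $\alpha>0$ such that for all $i,j\in\{1,\dots,2n\}$ and all $t\ge1$, if $p_{ij}(t)>0$ then $p_{ij}(t)\ge\alpha$, where $p_{ij}(t)$ denotes the $(i,j)$ entry of $P(t)$.
   Context: Fix an integer $n\ge 1$, $\mathcal{V}=\{1,\dots,n\}$, $\epsilon\in[0,1]$ and $\phi\in[0,1]$. Opinions $x_i(t)$ and actions $y_i(t)$ evolve for $t\in\mathbb{Z}_{\ge0}$ by: $\mathcal{N}_i(t)=\{j\in\mathcal{V}\mid j\neq i,\ |x_i(t)-y_j(t)|\le\epsilon\}$; $x_i(t+1)=\frac{x_i(t)+\sum_{j\in\mathcal{N}_i(t)}y_j(t)}{|\mathcal{N}_i(t)|+1}$; $y_i(t+1)=\phi\,x_i(t+1)+\frac{1-\phi}{n}\sum_{k=1}^n y_k(t)$, with initial values in $[0,1]$. For $t\ge1$, $P(t)=\begin{bmatrix}P_{11}(t)&P_{12}(t)\\ P_{21}&P_{22}\end{bmatrix}\in\mathbb{R}^{2n\times2n}$ with $n\times n$ blocks $[P_{11}(t)]_{ij}=\frac{1}{|\mathcal{N}_i(t)|+1}$ if $j=i$, $\frac{\phi}{|\mathcal{N}_i(t)|+1}$ if $j\in\mathcal{N}_i(t)$, $0$ otherwise; $[P_{12}(t)]_{ij}=\frac{(1-\phi)|\mathcal{N}_i(t)|}{(|\mathcal{N}_i(t)|+1)n}$ for all $i,j$; $P_{21}=\phi I_n$; $P_{22}=\frac{1-\phi}{n}\mathbf{1}_n\mathbf{1}_n^\top$.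 *)

theory Defs
  imports "HOL-Analysis.Analysis"
begin

text \<open>Agents are indexed by 0..n-1 (the paper's 1..n shifted by one);
  states are functions nat => real, only values below n matter.\<close>

definition nbrs :: "nat \<Rightarrow> real \<Rightarrow> (nat \<Rightarrow> real) \<Rightarrow> (nat \<Rightarrow> real) \<Rightarrow> nat \<Rightarrow> nat set" where
  "nbrs n \<epsilon> x y i = {j. j < n \<and> j \<noteq> i \<and> \<bar>x i - y j\<bar> \<le> \<epsilon>}"

definition step :: "nat \<Rightarrow> real \<Rightarrow> real \<Rightarrow> (nat \<Rightarrow> real) \<times> (nat \<Rightarrow> real)
    \<Rightarrow> (nat \<Rightarrow> real) \<times> (nat \<Rightarrow> real)" where
  "step n \<epsilon> \<phi> s =
    (let x = fst s; y = snd s;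
         x' = (\<lambda>i. (x i + (\<Sum>j\<in>nbrs n \<epsilon> x y i. y j)) / (real (card (nbrs n \<epsilon> x y i)) + 1));
         y' = (\<lambda>i. \<phi> * x' i + (1 - \<phi>) / real n * (\<Sum>k<n. y k))
     in (x', y'))"

fun traj :: "nat \<Rightarrow> real \<Rightarrow> real \<Rightarrow> (nat \<Rightarrow> real) \<Rightarrow> (nat \<Rightarrow> real) \<Rightarrow> nat
    \<Rightarrow> (nat \<Rightarrow> real) \<times> (nat \<Rightarrow> real)" where
  "traj n \<epsilon> \<phi> x0 y0 0 = (x0, y0)"
| "traj n \<epsilon> \<phi> x0 y0 (Suc t) = step n \<epsilon> \<phi> (traj n \<epsilon> \<phi> x0 y0 t)"

definition Nset :: "nat \<Rightarrow> real \<Rightarrow> real \<Rightarrow> (nat \<Rightarrow> real) \<Rightarrow> (nat \<Rightarrow> real) \<Rightarrow> nat \<Rightarrow> nat \<Rightarrow> nat set" where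
  "Nset n \<epsilon> \<phi> x0 y0 t i =
     (let s = traj n \<epsilon> \<phi> x0 y0 t in nbrs n \<epsilon> (fst s) (snd s) i)"

text \<open>Entry (i,j) of P(t), with 0-based indices i,j < 2n
  (row/column index < n: first block, otherwise second block).\<close>
definition Pmat :: "nat \<Rightarrow> real \<Rightarrow> real \<Rightarrow> (nat \<Rightarrow> real) \<Rightarrow> (nat \<Rightarrow> real) \<Rightarrow> nat \<Rightarrow> nat \<Rightarrow> nat \<Rightarrow> real" where
  "Pmat n \<epsilon> \<phi> x0 y0 t i j =
    (if i < n then
       (let N = Nset n \<epsilon> \<phi> x0 y0 t i; d = real (card N) + 1 in
        if j < n then (if j = i then 1 / d else if j \<in> N then \<phi> / d else 0)
        else (1 - \<phi>) * real (card N) / (d * real n))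
     else
       (if j < n then (if j = i - n then \<phi> else 0)
        else (1 - \<phi>) / real n))"

end

theory Submission
  imports Defs
begin

text \<open>Every entry of P(t) is one of 1/(c+1), \<phi>/(c+1), (1-\<phi>)c/((c+1)n), \<phi>, (1-\<phi>)/n or 0,
  where c = |N_i(t)| \<le> n, and the third one is nonzero only if c \<ge> 1. Hence every nonzero
  entry is at least min (\<phi>/(n+1)) ((1-\<phi>)/(2n)), whatever the trajectory.\<close>

lemma card_Nset_le: "card (Nset n \<epsilon> \<phi> x0 y0 t i) \<le> n"
proof -
  have "Nset n \<epsilon> \<phi> x0 y0 t i \<subseteq> {..<n}"
    by (auto simp: Nset_def nbrs_def Let_def)
  then show ?thesis
    by (metis card_lessThan card_mono finite_lessThan)
qed

lemma divide_succ_antimono: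
  fixes a c m :: real
  assumes "0 \<le> a" "0 \<le> c" "c \<le> m"
  shows "a / (m + 1) \<le> a / (c + 1)"
  using assms by (intro divide_left_mono) auto

lemma half_le_divide_succ:
  fixes a c m :: real
  assumes "0 \<le> a" "1 \<le> c" "0 < m"
  shows "a / (2 * m) \<le> a * c / ((c + 1) * m)"
proof -
  have "1 / 2 \<le> c / (c + 1)"
    using assms by (simp add: field_simps)
  then have "a / m * (1 / 2) \<le> a / m * (c / (c + 1))"
    using assms by (intro mult_left_mono) auto
  then show ?thesis
    by (simp add: ac_simps)
qed

lemma Pmat_ge_if_pos:
  assumes "n \<ge> 1" "0 < \<phi>" "\<phi> < 1"
    and pos: "0 < Pmat n \<epsilon> \<phi> x0 y0 t i j"
  shows "min (\<phi> / (real n + 1)) ((1 - \<phi>) / (2 * real n)) \<le> Pmat n \<epsilon> \<phi> x0 y0 t i j"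
proof -
  define c where "c = real (card (Nset n \<epsilon> \<phi> x0 y0 t i))"
  have c_le: "c \<le> real n"
    unfolding c_def using card_Nset_le by simp
  have c_ge: "0 \<le> c"
    unfolding c_def by simp
  have "\<phi> / (real n + 1) \<le> 1 / (real n + 1)"
    using assms by (simp add: divide_right_mono)
  also have "\<dots> \<le> 1 / (c + 1)"
    using divide_succ_antimono c_le c_ge by simp
  finally have diag: "\<phi> / (real n + 1) \<le> 1 / (c + 1)" .
  have nbr: "\<phi> / (real n + 1) \<le> \<phi> / (c + 1)"
    using divide_succ_antimono c_le c_ge assms by simp
  have act: "\<phi> / (real n + 1) \<le> \<phi>"
    using assms by (simp add: divide_le_eq)
  have mean: "(1 - \<phi>) / (2 * real n) \<le> (1 - \<phi>) / real n"
    using assms by (intro divide_left_mono) auto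
  have mean_nbr: "(1 - \<phi>) / (2 * real n) \<le> (1 - \<phi>) * c / ((c + 1) * real n)" if "c \<noteq> 0"
    using half_le_divide_succ[of "1 - \<phi>" c "real n"] that assms
    unfolding c_def by simp
  consider (opinion_opinion) "i < n" "j < n" | (opinion_action) "i < n" "\<not> j < n"
    | (action) "\<not> i < n"
    by blast
  then show ?thesis
  proof cases
    case opinion_opinion
    then show ?thesis
      using pos diag nbr unfolding Pmat_def c_def[symmetric] Let_def
      by (auto split: if_splits)
  next
    case opinion_action
    then have "c \<noteq> 0"
      using pos unfolding Pmat_def c_def[symmetric] Let_def by auto
    then show ?thesis
      using opinion_action mean_nbr unfolding Pmat_def c_def[symmetric] Let_def by auto
  next
    case action
    then show ?thesis
      using pos act mean unfolding Pmat_def by (auto split: if_splits)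
  qed
qed

theorem lemma2:
  fixes n :: nat and \<epsilon> \<phi> :: real and x0 y0 :: "nat \<Rightarrow> real"
  assumes "n \<ge> 1"
    and "0 \<le> \<epsilon>" and "\<epsilon> \<le> 1"
    and "0 < \<phi>" and "\<phi> < 1"
    and "\<forall>i<n. 0 \<le> x0 i \<and> x0 i \<le> 1"
    and "\<forall>i<n. 0 \<le> y0 i \<and> y0 i \<le> 1"
  shows "\<exists>\<alpha>>0. \<forall>i<2*n. \<forall>j<2*n. \<forall>t\<ge>1.
           Pmat n \<epsilon> \<phi> x0 y0 t i j > 0 \<longrightarrow> Pmat n \<epsilon> \<phi> x0 y0 t i j \<ge> \<alpha>"
proof (intro exI conjI allI impI)
  show "0 < min (\<phi> / (real n + 1)) ((1 - \<phi>) / (2 * real n))"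
    using assms by simp
  show "min (\<phi> / (real n + 1)) ((1 - \<phi>) / (2 * real n)) \<le> Pmat n \<epsilon> \<phi> x0 y0 t i j"
    if "0 < Pmat n \<epsilon> \<phi> x0 y0 t i j" for i j t
    using Pmat_ge_if_pos[OF assms(1,4,5) that] .
qed

end
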